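(* Let $i\ge 1$ be an integer and $k\ge 10i+15$. Let $H$ be a weighted graph with edge weight $\omega:E(H)\to\{3,4,5\}$ which contains no cycle of odd weight smaller than $2k+1$. If $P$ is a path in $H$ of minimal weight among all paths between its two end-vertices, then $N^i[P]$ is weighted bipartite.
   Context: The weight of a subgraph is the sum of the weights of its edges. $N^i[P]$ is the closed unweighted $i$-th neighbourhood of $V(P)$: the set of vertices at (unweighted) graph distance at most $i$ from some vertex of $P$. A vertex set $S$ is weighted bipartite if the induced subgraph $H[S]$ contains no cycle of odd weight. *)

theory Defs
  imports Main
begin

definition simple_graph :: "'a set \<Rightarrow> ('a \<Rightarrow> 'a \<Rightarrow> bool) \<Rightarrow> bool" where
  "simple_graph V E \<longleftrightarrow> finite V \<and>
     (\<forall>u v. E u v \<longrightarrow> u \<in> V \<and> v \<in> V \<and> u \<noteq> v \<and> E v u)"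

definition is_path :: "'a set \<Rightarrow> ('a \<Rightarrow> 'a \<Rightarrow> bool) \<Rightarrow> 'a list \<Rightarrow> bool" where
  "is_path S E p \<longleftrightarrow> p \<noteq> [] \<and> distinct p \<and> set p \<subseteq> S \<and>
     (\<forall>j. Suc j < length p \<longrightarrow> E (p ! j) (p ! Suc j))"

definition is_cycle :: "'a set \<Rightarrow> ('a \<Rightarrow> 'a \<Rightarrow> bool) \<Rightarrow> 'a list \<Rightarrow> bool" where
  "is_cycle S E c \<longleftrightarrow> length c \<ge> 3 \<and> distinct c \<and> set c \<subseteq> S \<and>
     (\<forall>j. Suc j < length c \<longrightarrow> E (c ! j) (c ! Suc j)) \<and> E (last c) (hd c)"

definition path_weight :: "('a \<Rightarrow> 'a \<Rightarrow> nat) \<Rightarrow> 'a list \<Rightarrow> nat" where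
  "path_weight w p = sum_list (map (\<lambda>(u, v). w u v) (zip p (tl p)))"

definition cycle_weight :: "('a \<Rightarrow> 'a \<Rightarrow> nat) \<Rightarrow> 'a list \<Rightarrow> nat" where
  "cycle_weight w c = path_weight w c + w (last c) (hd c)"

definition closed_nbhd :: "'a set \<Rightarrow> ('a \<Rightarrow> 'a \<Rightarrow> bool) \<Rightarrow> nat \<Rightarrow> 'a set \<Rightarrow> 'a set" where
  "closed_nbhd V E i T = {x \<in> V. \<exists>q. is_path V E q \<and> hd q = x \<and> last q \<in> T \<and> length q \<le> Suc i}"

definition weighted_bipartite :: "('a \<Rightarrow> 'a \<Rightarrow> bool) \<Rightarrow> ('a \<Rightarrow> 'a \<Rightarrow> nat) \<Rightarrow> 'a set \<Rightarrow> bool" where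
  "weighted_bipartite E w S \<longleftrightarrow> \<not> (\<exists>c. is_cycle S E c \<and> odd (cycle_weight w c))"

end

theory Submission imports Defs begin

(* For a vertex x of N^i[P] fix a walk R x of at most i edges from x to a vertex P ! J x of P,
   and put f x = w(R x) + w(P[0..J x]).  For an edge xy inside N^i[P] with J x <= J y, the closed
   walk R x, P[J x..J y], R y reversed, yx is short: P is a geodesic, so P[J x..J y] weighs at most
   the detour R x reversed, xy, R y, and the closed walk weighs at most 2 (5i + 5i + 5) < 2k + 1.
   An odd closed walk contains an odd cycle of no larger weight, so this closed walk is even; as its
   weight is w(xy) + f x + f y - 2 w(P[0..J x]), f is a parity potential on N^i[P], which therefore
   carries no odd cycle. *)

fun walk :: "('a \<Rightarrow> 'a \<Rightarrow> bool) \<Rightarrow> 'a list \<Rightarrow> bool" where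
  "walk E [] = True"
| "walk E (x # ys) \<longleftrightarrow> walk E ys \<and> (ys \<noteq> [] \<longrightarrow> E x (hd ys))"

lemma walk_iff_nth: "walk E xs \<longleftrightarrow> (\<forall>j. Suc j < length xs \<longrightarrow> E (xs ! j) (xs ! Suc j))"
proof (induction xs)
  case (Cons x ys)
  then show ?case
    by (cases ys) (auto simp: nth_Cons' less_Suc_eq_0_disj)
qed simp

lemma walk_append:
  "walk E (xs @ ys) \<longleftrightarrow> walk E xs \<and> walk E ys \<and> (xs \<noteq> [] \<and> ys \<noteq> [] \<longrightarrow> E (last xs) (hd ys))"
  by (induction xs) auto

lemma walk_rev: "symp E \<Longrightarrow> walk E xs \<Longrightarrow> walk E (rev xs)"
  by (induction xs) (auto simp: walk_append last_rev dest: sympD)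

lemma walk_take: "walk E xs \<Longrightarrow> walk E (take n xs)"
  by (auto simp: walk_iff_nth)

lemma walk_drop: "walk E xs \<Longrightarrow> walk E (drop n xs)"
  by (auto simp: walk_iff_nth)

lemma path_weight_Nil [simp]: "path_weight w [] = 0"
  by (simp add: path_weight_def)

lemma path_weight_Cons:
  "path_weight w (x # ys) = (if ys = [] then 0 else w x (hd ys) + path_weight w ys)"
  by (cases ys) (auto simp: path_weight_def)

lemma path_weight_append:
  "path_weight w (xs @ ys) =
     path_weight w xs + path_weight w ys + (if xs \<noteq> [] \<and> ys \<noteq> [] then w (last xs) (hd ys) else 0)"
  by (induction xs) (auto simp: path_weight_Cons)

lemma path_weight_append_tl:
  "xs \<noteq> [] \<Longrightarrow> last xs = hd ys \<Longrightarrow> path_weight w (xs @ tl ys) = path_weight w xs + path_weight w ys"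
  by (cases ys) (auto simp: path_weight_append path_weight_Cons)

lemma path_weight_rev:
  assumes "\<forall>u v. E u v \<longrightarrow> w u v = w v u" and "walk E xs"
  shows "path_weight w (rev xs) = path_weight w xs"
  using assms(2)
proof (induction xs)
  case (Cons x xs)
  then show ?case
    using assms(1) by (cases xs) (auto simp: path_weight_append path_weight_Cons last_rev hd_rev)
qed simp

lemma path_weight_le_length:
  "\<forall>u v. E u v \<longrightarrow> w u v \<le> c \<Longrightarrow> walk E xs \<Longrightarrow> path_weight w xs \<le> c * (length xs - 1)"
proof (induction xs)
  case (Cons x ys)
  then show ?case
    by (cases ys) (auto simp: path_weight_Cons, fastforce)
qed simp

lemma path_weight_split_nth:
  assumes "j < length xs"
  shows "path_weight w xs = path_weight w (take (Suc j) xs) + path_weight w (drop j xs)"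
proof -
  have "xs = take (Suc j) xs @ tl (drop j xs)"
    by (metis append_take_drop_id drop_Suc tl_drop)
  moreover have "last (take (Suc j) xs) = hd (drop j xs)"
    using assms by (simp add: take_Suc_conv_app_nth hd_drop_conv_nth)
  moreover have "take (Suc j) xs \<noteq> []"
    using assms by auto
  ultimately show ?thesis
    by (metis path_weight_append_tl)
qed

lemma simple_graph_symp: "simple_graph V E \<Longrightarrow> symp E"
  by (auto simp: simple_graph_def intro: sympI)

definition walk_between :: "'a set \<Rightarrow> ('a \<Rightarrow> 'a \<Rightarrow> bool) \<Rightarrow> 'a \<Rightarrow> 'a \<Rightarrow> 'a list \<Rightarrow> bool" where
  "walk_between V E x y R \<longleftrightarrow> walk E R \<and> R \<noteq> [] \<and> set R \<subseteq> V \<and> hd R = x \<and> last R = y"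

lemma walk_between_append_tl:
  assumes "walk_between V E x y R" and "walk_between V E y z R'"
  shows "walk_between V E x z (R @ tl R')"
  using assms by (cases R') (auto simp: walk_between_def walk_append)

lemma walk_between_append_edge:
  assumes "walk_between V E x y R" and "walk_between V E y' z R'" and "E y y'"
  shows "walk_between V E x z (R @ R')"
  using assms by (auto simp: walk_between_def walk_append)

lemma walk_between_rev:
  "symp E \<Longrightarrow> walk_between V E x y R \<Longrightarrow> walk_between V E y x (rev R)"
  by (auto simp: walk_between_def walk_rev hd_rev last_rev)

lemma path_weight_walk_between_append_tl:
  "walk_between V E x y R \<Longrightarrow> walk_between V E y z R' \<Longrightarrow>
    path_weight w (R @ tl R') = path_weight w R + path_weight w R'"
  by (simp add: walk_between_def path_weight_append_tl)

lemma walk_between_segment: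
  assumes "is_path V E P" and "p \<le> q" and "q < length P"
  shows "walk_between V E (P ! p) (P ! q) (drop p (take (Suc q) P))"
proof -
  have "walk E P"
    using assms(1) by (simp add: is_path_def walk_iff_nth)
  then have "walk E (drop p (take (Suc q) P))"
    by (simp add: walk_drop walk_take)
  moreover have "hd (drop p (take (Suc q) P)) = P ! p"
    using assms by (simp add: hd_drop_conv_nth)
  moreover have "last (drop p (take (Suc q) P)) = P ! q"
    using assms by (simp add: take_Suc_conv_app_nth)
  ultimately show ?thesis
    using assms by (auto simp: walk_between_def is_path_def dest: in_set_dropD in_set_takeD)
qed

lemma walk_between_shortcut:
  "walk_between V E x y R \<Longrightarrow>
    \<exists>Q. is_path V E Q \<and> hd Q = x \<and> last Q = y \<and> path_weight w Q \<le> path_weight w R"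
proof (induction "length R" arbitrary: R rule: less_induct)
  case less
  show ?case
  proof (cases "distinct R")
    case True
    then show ?thesis
      using less.prems by (auto simp: is_path_def walk_between_def walk_iff_nth[symmetric])
  next
    case False
    then obtain a u b c where R: "R = a @ [u] @ b @ [u] @ c"
      using not_distinct_decomp by blast
    have "walk E (a @ u # c)"
      using less.prems R by (auto simp: walk_between_def walk_append)
    moreover have "hd (a @ u # c) = hd R" "last (a @ u # c) = last R"
      using R by (cases a; cases c; simp)+
    ultimately have "walk_between V E x y (a @ u # c)"
      using less.prems R by (auto simp: walk_between_def)
    moreover have "path_weight w (a @ u # c) \<le> path_weight w R"
      using R by (auto simp: path_weight_append path_weight_Cons)
    moreover have "length (a @ u # c) < length R"
      using R by simp
    ultimately show ?thesis
      using less.hyps by (meson order.trans)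
  qed
qed

lemma odd_closed_walk_weight_ge:
  assumes "simple_graph V E" and "\<forall>u v. E u v \<longrightarrow> w u v = w v u"
    and "\<forall>c. is_cycle V E c \<and> odd (cycle_weight w c) \<longrightarrow> B \<le> cycle_weight w c"
  shows "walk_between V E x y c \<Longrightarrow> E y x \<Longrightarrow> odd (cycle_weight w c) \<Longrightarrow> B \<le> cycle_weight w c"
proof (induction "length c" arbitrary: c x y rule: less_induct)
  case less
  have irrefl: "\<not> E u u" for u
    using assms(1) by (auto simp: simple_graph_def)
  show ?case
  proof (cases "distinct c")
    case True
    have "c \<noteq> []"
      using less.prems(1) by (simp add: walk_between_def)
    then consider "length c = 1" | "length c = 2" | "length c \<ge> 3"
      by (cases "length c") (auto, linarith)
    then show ?thesis
    proof cases
      case 1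
      then show ?thesis
        using less.prems irrefl by (cases c) (auto simp: walk_between_def)
    next
      case 2
      then obtain u v where "c = [u, v]"
        by (metis One_nat_def Suc_1 length_0_conv length_Suc_conv)
      then show ?thesis
        using less.prems assms(2) by (auto simp: walk_between_def cycle_weight_def path_weight_Cons)
    next
      case 3
      then have "is_cycle V E c"
        using less.prems True by (auto simp: is_cycle_def walk_between_def walk_iff_nth[symmetric])
      then show ?thesis
        using assms(3) less.prems(3) by blast
    qed
  next
    case False
    then obtain a u b d where c: "c = a @ [u] @ b @ [u] @ d"
      using not_distinct_decomp by blast
    have "b \<noteq> []"
      using less.prems(1) c irrefl by (auto simp: walk_between_def walk_append)
    have "walk E (a @ u # d)" "walk E (u # b)" "E (last b) u"
      using less.prems(1) c \<open>b \<noteq> []\<close> by (auto simp: walk_between_def walk_append)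
    moreover have "hd (a @ u # d) = x" "last (a @ u # d) = y"
      using less.prems(1) c by (cases a; cases d; auto simp: walk_between_def)+
    ultimately have c1: "walk_between V E x y (a @ u # d)"
      and c2: "walk_between V E u (last b) (u # b)"
      using less.prems(1) c \<open>b \<noteq> []\<close> by (auto simp: walk_between_def)
    have split: "cycle_weight w c = cycle_weight w (a @ u # d) + cycle_weight w (u # b)"
      using c \<open>b \<noteq> []\<close> c1 by (auto simp: walk_between_def cycle_weight_def path_weight_append path_weight_Cons)
    have "odd (cycle_weight w (a @ u # d)) \<or> odd (cycle_weight w (u # b))"
      using split less.prems(3) by auto
    then show ?thesis
    proof
      assume "odd (cycle_weight w (a @ u # d))"
      then have "B \<le> cycle_weight w (a @ u # d)"
        using less.hyps c c1 less.prems(2) by simp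
      then show ?thesis
        using split by linarith
    next
      assume "odd (cycle_weight w (u # b))"
      then have "B \<le> cycle_weight w (u # b)"
        using less.hyps c c2 \<open>E (last b) u\<close> by simp
      then show ?thesis
        using split by linarith
    qed
  qed
qed

lemma even_add_double_cancel: "even a \<Longrightarrow> even b \<Longrightarrow> c + 2 * d = a + b \<Longrightarrow> even (c :: nat)"
  by presburger

lemma walk_weight_parity:
  assumes potential: "\<forall>x\<in>S. \<forall>y\<in>S. E x y \<longrightarrow> even (w x y + f x + f y)"
  shows "walk E c \<Longrightarrow> c \<noteq> [] \<Longrightarrow> set c \<subseteq> S \<Longrightarrow> even (path_weight w c + f (hd c) + f (last c))"
proof (induction c)
  case (Cons x ys)
  show ?case
  proof (cases "ys = []")
    case False
    have "walk E ys" "E x (hd ys)" "x \<in> S" "hd ys \<in> S" "set ys \<subseteq> S"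
      using Cons.prems False by auto
    then have "even (path_weight w ys + f (hd ys) + f (last ys))" "even (w x (hd ys) + f x + f (hd ys))"
      using Cons.IH False potential by auto
    moreover have "path_weight w (x # ys) + f x + f (last ys) + 2 * f (hd ys)
        = (path_weight w ys + f (hd ys) + f (last ys)) + (w x (hd ys) + f x + f (hd ys))"
      using False by (simp add: path_weight_Cons)
    ultimately have "even (path_weight w (x # ys) + f x + f (last ys))"
      by (rule even_add_double_cancel)
    then show ?thesis
      using False by simp
  qed (simp add: path_weight_Cons)
qed simp

lemma weighted_bipartite_if_parity_potential:
  assumes potential: "\<forall>x\<in>S. \<forall>y\<in>S. E x y \<longrightarrow> even (w x y + f x + f y)"
  shows "weighted_bipartite E w S"
  unfolding weighted_bipartite_def
proof (rule notI, elim exE conjE)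
  fix c
  assume "is_cycle S E c" and "odd (cycle_weight w c)"
  then have "walk E c" "c \<noteq> []" "set c \<subseteq> S" "E (last c) (hd c)"
    by (auto simp: is_cycle_def walk_iff_nth)
  then have "even (path_weight w c + f (hd c) + f (last c))"
    and "even (w (last c) (hd c) + f (last c) + f (hd c))"
    using walk_weight_parity[OF potential] potential hd_in_set[of c] last_in_set[of c] by blast+
  moreover have "cycle_weight w c + 2 * (f (hd c) + f (last c))
      = (path_weight w c + f (hd c) + f (last c)) + (w (last c) (hd c) + f (last c) + f (hd c))"
    by (simp add: cycle_weight_def)
  ultimately have "even (cycle_weight w c)"
    by (rule even_add_double_cancel)
  then show False
    using \<open>odd (cycle_weight w c)\<close> by simp
qed

definition geodesic :: "'a set \<Rightarrow> ('a \<Rightarrow> 'a \<Rightarrow> bool) \<Rightarrow> ('a \<Rightarrow> 'a \<Rightarrow> nat) \<Rightarrow> 'a list \<Rightarrow> bool" where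
  "geodesic V E w P \<longleftrightarrow> is_path V E P \<and>
     (\<forall>Q. is_path V E Q \<and> hd Q = hd P \<and> last Q = last P \<longrightarrow> path_weight w P \<le> path_weight w Q)"

lemma geodesic_segment_le_walk:
  assumes "geodesic V E w P" and "p \<le> q" and "q < length P"
    and "walk_between V E (P ! p) (P ! q) M"
  shows "path_weight w (drop p (take (Suc q) P)) \<le> path_weight w M"
proof -
  let ?pre = "take (Suc p) P" and ?seg = "drop p (take (Suc q) P)" and ?suf = "drop q P"
  have P: "is_path V E P"
    using assms(1) by (simp add: geodesic_def)
  have "walk_between V E (P ! 0) (P ! p) ?pre"
    using walk_between_segment[OF P, of 0 p] assms(2,3) by simp
  moreover have "walk_between V E (P ! q) (P ! (length P - 1)) ?suf"
    using walk_between_segment[OF P, of q "length P - 1"] assms(3) by simp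
  moreover have "P ! 0 = hd P" "P ! (length P - 1) = last P"
    using P by (auto simp: is_path_def hd_conv_nth last_conv_nth)
  ultimately have pre: "walk_between V E (hd P) (P ! p) ?pre"
    and suf: "walk_between V E (P ! q) (last P) ?suf"
    by simp_all
  have Msuf: "walk_between V E (P ! p) (last P) (M @ tl ?suf)"
    using assms(4) suf by (rule walk_between_append_tl)
  have detour: "walk_between V E (hd P) (last P) (?pre @ tl (M @ tl ?suf))"
    using pre Msuf by (rule walk_between_append_tl)
  obtain Q where Q: "is_path V E Q" "hd Q = hd P" "last Q = last P"
    "path_weight w Q \<le> path_weight w (?pre @ tl (M @ tl ?suf))"
    using walk_between_shortcut[OF detour] by blast
  have "path_weight w (?pre @ tl (M @ tl ?suf)) = path_weight w ?pre + path_weight w M + path_weight w ?suf"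
    using path_weight_walk_between_append_tl[OF pre Msuf]
      path_weight_walk_between_append_tl[OF assms(4) suf] by simp
  moreover have "path_weight w P = path_weight w ?pre + path_weight w ?seg + path_weight w ?suf"
    using path_weight_split_nth[of q P w] path_weight_split_nth[of p "take (Suc q) P" w] assms(2,3)
    by (simp add: min_def)
  moreover have "path_weight w P \<le> path_weight w Q"
    using assms(1) Q by (simp add: geodesic_def)
  ultimately show ?thesis
    using Q(4) by linarith
qed

lemma even_potential_across_edge:
  assumes "simple_graph V E" and weight_sym: "\<forall>u v. E u v \<longrightarrow> w u v = w v u"
    and odd_cycles: "\<forall>c. is_cycle V E c \<and> odd (cycle_weight w c) \<longrightarrow> B \<le> cycle_weight w c"
    and "geodesic V E w P" and "p \<le> q" and "q < length P"
    and Rx: "walk_between V E x (P ! p) Rx" and Ry: "walk_between V E y (P ! q) Ry"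
    and "E x y" and short: "2 * (path_weight w Rx + path_weight w Ry + w x y) < B"
  shows "even (w x y + (path_weight w Rx + path_weight w (take (Suc p) P))
                   + (path_weight w Ry + path_weight w (take (Suc q) P)))"
proof -
  let ?seg = "drop p (take (Suc q) P)"
  have E_sym: "symp E"
    using assms(1) by (rule simple_graph_symp)
  have seg: "walk_between V E (P ! p) (P ! q) ?seg"
    using assms(4-6) by (intro walk_between_segment) (auto simp: geodesic_def)
  have Rx_rev: "walk_between V E (P ! p) x (rev Rx)"
    using E_sym Rx by (rule walk_between_rev)
  have "walk_between V E (P ! p) (P ! q) (rev Rx @ Ry)"
    using Rx_rev Ry \<open>E x y\<close> by (rule walk_between_append_edge)
  moreover have "path_weight w (rev Rx @ Ry) = path_weight w Rx + w x y + path_weight w Ry"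
    using Rx Ry Rx_rev path_weight_rev[OF weight_sym, of Rx]
    by (auto simp: walk_between_def path_weight_append)
  ultimately have seg_short: "path_weight w ?seg \<le> path_weight w Rx + w x y + path_weight w Ry"
    using geodesic_segment_le_walk[OF assms(4-6)] by metis
  define C where "C = Rx @ tl (?seg @ tl (rev Ry))"
  have seg_Ry: "walk_between V E (P ! p) y (?seg @ tl (rev Ry))"
    using seg walk_between_rev[OF E_sym Ry] by (rule walk_between_append_tl)
  have C: "walk_between V E x y C"
    unfolding C_def using Rx seg_Ry by (rule walk_between_append_tl)
  have weight_C: "cycle_weight w C = path_weight w Rx + path_weight w ?seg + path_weight w Ry + w x y"
    using C path_weight_walk_between_append_tl[OF Rx seg_Ry]
      path_weight_walk_between_append_tl[OF seg walk_between_rev[OF E_sym Ry]]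
      path_weight_rev[OF weight_sym, of Ry] Ry weight_sym \<open>E x y\<close> sympD[OF E_sym \<open>E x y\<close>]
    by (simp add: C_def cycle_weight_def walk_between_def)
  have even_C: "even (cycle_weight w C)"
  proof -
    have "\<not> B \<le> cycle_weight w C"
      using weight_C seg_short short by arith
    then show ?thesis
      using odd_closed_walk_weight_ge[OF assms(1) weight_sym odd_cycles C sympD[OF E_sym \<open>E x y\<close>]]
      by blast
  qed
  have "path_weight w (take (Suc q) P) = path_weight w (take (Suc p) P) + path_weight w ?seg"
    using path_weight_split_nth[of p "take (Suc q) P" w] assms(5,6) by (simp add: min_def)
  then have "w x y + (path_weight w Rx + path_weight w (take (Suc p) P))
      + (path_weight w Ry + path_weight w (take (Suc q) P))
      = cycle_weight w C + 2 * path_weight w (take (Suc p) P)"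
    using weight_C by simp
  then show ?thesis
    using even_C by (metis dvd_add dvd_triv_left)
qed

lemma closed_nbhd_walk:
  assumes "x \<in> closed_nbhd V E i (set P)"
  shows "\<exists>j R. j < length P \<and> walk_between V E x (P ! j) R \<and> length R \<le> Suc i"
proof -
  obtain R where "is_path V E R" "hd R = x" "last R \<in> set P" "length R \<le> Suc i"
    using assms by (auto simp: closed_nbhd_def)
  moreover obtain j where "j < length P" "last R = P ! j"
    using \<open>last R \<in> set P\<close> by (metis in_set_conv_nth)
  ultimately show ?thesis
    by (auto simp: walk_between_def is_path_def walk_iff_nth)
qed

lemma geodesic_closed_nbhd_parity_potential:
  assumes "simple_graph V E" and weight_sym: "\<forall>u v. E u v \<longrightarrow> w u v = w v u"
    and weight_le: "\<forall>u v. E u v \<longrightarrow> w u v \<le> m"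
    and odd_cycles: "\<forall>c. is_cycle V E c \<and> odd (cycle_weight w c) \<longrightarrow> B \<le> cycle_weight w c"
    and geo: "geodesic V E w P" and short: "2 * (2 * m * i + m) < B"
  obtains f where "\<forall>x\<in>closed_nbhd V E i (set P). \<forall>y\<in>closed_nbhd V E i (set P).
    E x y \<longrightarrow> even (w x y + f x + f y)"
proof -
  let ?S = "closed_nbhd V E i (set P)"
  obtain J R where JR: "\<And>x. x \<in> ?S \<Longrightarrow>
      J x < length P \<and> walk_between V E x (P ! J x) (R x) \<and> length (R x) \<le> Suc i"
    using closed_nbhd_walk by metis
  have R_short: "path_weight w (R x) \<le> m * i" if "x \<in> ?S" for x
  proof -
    have "path_weight w (R x) \<le> m * (length (R x) - 1)"
      using path_weight_le_length[OF weight_le, of "R x"] JR[OF that] by (simp add: walk_between_def)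
    also have "\<dots> \<le> m * i"
      using JR[OF that] by (intro mult_le_mono2) auto
    finally show ?thesis .
  qed
  define f where "f x = path_weight w (R x) + path_weight w (take (Suc (J x)) P)" for x
  have edge_parity: "even (w x y + f x + f y)"
    if "x \<in> ?S" "y \<in> ?S" "E x y" "J x \<le> J y" for x y
  proof -
    have "2 * (path_weight w (R x) + path_weight w (R y) + w x y) < B"
      using R_short[OF that(1)] R_short[OF that(2)] weight_le \<open>E x y\<close> short by fastforce
    then show ?thesis
      unfolding f_def
      using even_potential_across_edge[OF assms(1) weight_sym odd_cycles geo \<open>J x \<le> J y\<close>]
        JR[OF that(1)] JR[OF that(2)] \<open>E x y\<close> by blast
  qed
  have "\<forall>x\<in>?S. \<forall>y\<in>?S. E x y \<longrightarrow> even (w x y + f x + f y)"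
  proof (intro ballI impI)
    fix x y
    assume "x \<in> ?S" "y \<in> ?S" "E x y"
    then show "even (w x y + f x + f y)"
      using edge_parity[of x y] edge_parity[of y x] weight_sym simple_graph_symp[OF assms(1)]
      by (cases "J x \<le> J y") (auto simp: add_ac dest: sympD)
  qed
  then show ?thesis
    by (rule that)
qed

theorem lemma4p2:
  fixes V :: "'a set" and E :: "'a \<Rightarrow> 'a \<Rightarrow> bool" and w :: "'a \<Rightarrow> 'a \<Rightarrow> nat"
    and i k :: nat and P :: "'a list"
  assumes "i \<ge> 1" and "k \<ge> 10 * i + 15"
    and "simple_graph V E"
    and "\<forall>u v. E u v \<longrightarrow> w u v \<in> {3, 4, 5} \<and> w u v = w v u"
    and "\<forall>c. is_cycle V E c \<and> odd (cycle_weight w c) \<longrightarrow> cycle_weight w c \<ge> 2 * k + 1"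
    and "is_path V E P"
    and "\<forall>Q. is_path V E Q \<and> hd Q = hd P \<and> last Q = last P \<longrightarrow> path_weight w P \<le> path_weight w Q"
  shows "weighted_bipartite E w (closed_nbhd V E i (set P))"
proof -
  have "\<forall>u v. E u v \<longrightarrow> w u v = w v u"
    using assms(4) by blast
  moreover have "\<forall>u v. E u v \<longrightarrow> w u v \<le> 5"
    using assms(4) by fastforce
  moreover have "geodesic V E w P"
    using assms(6,7) by (simp add: geodesic_def)
  moreover have "2 * (2 * 5 * i + 5) < 2 * k + 1"
    using assms(2) by simp
  ultimately obtain f where "\<forall>x\<in>closed_nbhd V E i (set P). \<forall>y\<in>closed_nbhd V E i (set P).
      E x y \<longrightarrow> even (w x y + f x + f y)"
    using geodesic_closed_nbhd_parity_potential[OF assms(3) _ _ assms(5)] by blast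
  then show ?thesis
    by (rule weighted_bipartite_if_parity_potential)
qed

end
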